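(* The metric space $(\mathfrak S_1(\mathbb T),d)$ is complete.
   Context: A rigged subset $S$ of a set $X$ assigns to each $x$ a multiplicity $\mathrm{mult}(x;S)\in\{0,1,\dots,\infty\}$; an enumeration is a sequence in which each $x$ appears $\mathrm{mult}(x;S)$ times. $\mathfrak S_\infty(\mathbb T)$ consists of countable rigged subsets of the unit circle $\mathbb T$ (arc-length metric) in which $1$ has multiplicity $\infty$ and with no other accumulation point (point every neighbourhood of which contains infinitely many elements counting multiplicity). $d(S,T)=\inf\sum_j\mathrm{dist}(s_j,t_j)$ over all enumerations $(s_j),(t_j)$ of $S,T$, and $\mathfrak S_1(\mathbb T)=\{S\in\mathfrak S_\infty(\mathbb T):d(S,\mathbf 1)<\infty\}$, with $\mathbf 1$ the rigged set consisting of $1$ with infinite multiplicity. *)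

theory Defs
  imports "HOL-Analysis.Analysis" "HOL-Library.Extended_Nat" "HOL-Library.Extended_Nonnegative_Real"
begin

text \<open>A rigged subset of the unit circle T (= sphere 0 1 in the complex plane) is
  represented by its multiplicity function, which vanishes off T.\<close>

type_synonym rigged = "complex \<Rightarrow> enat"

definition circle :: "complex set" where
  "circle = sphere 0 1"

text \<open>Arc-length distance on the unit circle (chord c corresponds to arc 2 arcsin (c/2)).\<close>
definition arcdist :: "complex \<Rightarrow> complex \<Rightarrow> real" where
  "arcdist z w = 2 * arcsin (cmod (z - w) / 2)"

definition rsupp :: "rigged \<Rightarrow> complex set" where
  "rsupp S = {x. S x \<noteq> 0}"

definition rigged_on_circle :: "rigged \<Rightarrow> bool" where
  "rigged_on_circle S \<longleftrightarrow> rsupp S \<subseteq> circle"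

text \<open>Every neighbourhood of x contains infinitely many elements counting multiplicity.\<close>
definition accpt :: "rigged \<Rightarrow> complex \<Rightarrow> bool" where
  "accpt S x \<longleftrightarrow> (\<forall>U. open U \<and> x \<in> U \<longrightarrow>
      infinite (U \<inter> rsupp S) \<or> (\<exists>y\<in>U. S y = \<infinity>))"

definition S_inf :: "rigged set" where
  "S_inf = {S. rigged_on_circle S \<and> countable (rsupp S) \<and> S 1 = \<infinity> \<and>
                (\<forall>x\<in>circle. accpt S x \<longrightarrow> x = 1)}"

definition ecount :: "(nat \<Rightarrow> complex) \<Rightarrow> complex \<Rightarrow> enat" where
  "ecount s x = (if finite {j. s j = x} then enat (card {j. s j = x}) else \<infinity>)"

definition is_enum :: "rigged \<Rightarrow> (nat \<Rightarrow> complex) \<Rightarrow> bool" where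
  "is_enum S s \<longleftrightarrow> (\<forall>x. ecount s x = S x)"

definition rdist :: "rigged \<Rightarrow> rigged \<Rightarrow> ennreal" where
  "rdist S T = (INF st \<in> {(s, t). is_enum S s \<and> is_enum T t}.
                  (\<Sum>j. ennreal (arcdist (fst st j) (snd st j))))"

definition one_rigged :: rigged where
  "one_rigged = (\<lambda>x. if x = 1 then \<infinity> else 0)"

definition S_one :: "rigged set" where
  "S_one = {S \<in> S_inf. rdist S one_rigged < \<infinity>}"

text \<open>Real-valued version of d (finite on S_one).\<close>
definition rdist_real :: "rigged \<Rightarrow> rigged \<Rightarrow> real" where
  "rdist_real S T = enn2real (rdist S T)"

end

theory Submission
  imports Defs
begin

text \<open>Completeness reduces to convergence of sequences \<open>T n\<close> with
  \<open>d(T n, T (n+1)) < 2^-n\<close>. Composing near-optimal matchings yields enumerations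
  \<open>f n\<close> of \<open>T n\<close> whose consecutive matching costs are summable, and padding each
  of them with ones at the odd indices keeps 1 of infinite multiplicity. The enumerations converge
  pointwise on the circle to a sequence \<open>t\<close> that is matched to the constant sequence 1
  at finite cost; hence \<open>t\<close> can accumulate only at 1, the rigged set it enumerates lies
  in \<open>S_one\<close>, and it is the limit of \<open>T\<close>.\<close>

section \<open>Arc-length distance on the circle\<close>

lemma norm_exp_i_minus_1:
  fixes t :: real
  shows "cmod (exp (\<i> * of_real t) - 1) = 2 * \<bar>sin (t/2)\<bar>"
proof -
  have "exp (\<i> * of_real t) - 1
          = exp (\<i> * of_real (t/2)) * (exp (\<i> * of_real (t/2)) - exp (- (\<i> * of_real (t/2))))"
    by (simp add: algebra_simps flip: exp_add)
  also have "exp (\<i> * of_real (t/2)) - exp (- (\<i> * of_real (t/2))) = 2 * \<i> * sin (of_real (t/2))"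
    by (simp add: sin_exp_eq)
  also have "sin (complex_of_real (t/2)) = complex_of_real (sin (t/2))"
    by (rule sin_of_real)
  finally show ?thesis
    by (simp add: norm_mult)
qed

lemma arcsin_abs_sin_half:
  assumes "\<bar>t\<bar> \<le> pi"
  shows "2 * arcsin \<bar>sin (t/2)\<bar> = \<bar>t\<bar>"
proof -
  have "\<bar>sin (t/2)\<bar> = sin (\<bar>t\<bar>/2)"
  proof (cases "t \<ge> 0")
    case False
    have "0 \<le> sin (-t/2)"
      using assms False by (intro sin_ge_zero) auto
    then show ?thesis
      using False by (simp add: sin_minus)
  qed (use assms in \<open>auto simp: sin_ge_zero\<close>)
  moreover have "arcsin (sin (\<bar>t\<bar>/2)) = \<bar>t\<bar>/2"
    using assms by (intro arcsin_sin) auto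
  ultimately show ?thesis
    by simp
qed

lemma norm_in_circle: "z \<in> circle \<Longrightarrow> cmod z = 1"
  by (simp add: circle_def)

lemma one_in_circle: "1 \<in> circle"
  by (simp add: circle_def)

lemma closed_circle: "closed circle"
  by (simp add: circle_def)

lemma mult_cnj_in_circle: "z \<in> circle \<Longrightarrow> z * cnj z = 1"
  by (metis complex_norm_square norm_in_circle of_real_1 power_one)

lemma norm_diff_in_circle_le_2: "z \<in> circle \<Longrightarrow> w \<in> circle \<Longrightarrow> cmod (z - w) \<le> 2"
  using norm_triangle_ineq4[of z w] by (simp add: norm_in_circle)

lemma arcdist_eq_abs_Arg:
  assumes "z \<in> circle" "w \<in> circle"
  shows "arcdist z w = \<bar>Arg (z * cnj w)\<bar>"
proof -
  let ?q = "z * cnj w"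
  have nq: "cmod ?q = 1"
    using assms by (simp add: norm_in_circle norm_mult)
  then have q: "?q = exp (\<i> * of_real (Arg ?q))"
    using Arg_eq[of ?q] by fastforce
  have "z - w = (?q - 1) * w"
    using mult_cnj_in_circle[OF assms(2)] by (simp add: algebra_simps)
  then have "cmod (z - w) = cmod (?q - 1)"
    using assms by (simp add: norm_mult norm_in_circle)
  also have "\<dots> = 2 * \<bar>sin (Arg ?q / 2)\<bar>"
    by (subst q) (rule norm_exp_i_minus_1)
  finally have "arcdist z w = 2 * arcsin \<bar>sin (Arg ?q / 2)\<bar>"
    by (simp add: arcdist_def)
  also have "\<dots> = \<bar>Arg ?q\<bar>"
    using mpi_less_Arg[of ?q] Arg_le_pi[of ?q] by (intro arcsin_abs_sin_half) auto
  finally show ?thesis .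
qed

lemma abs_Arg_mult_le:
  assumes "cmod a = 1" "cmod b = 1"
  shows "\<bar>Arg (a * b)\<bar> \<le> \<bar>Arg a\<bar> + \<bar>Arg b\<bar>"
proof (cases "\<bar>Arg a\<bar> + \<bar>Arg b\<bar> < pi")
  case False
  then show ?thesis
    using mpi_less_Arg[of "a * b"] Arg_le_pi[of "a * b"] by linarith
next
  case True
  have "a * b = exp (\<i> * of_real (Arg a)) * exp (\<i> * of_real (Arg b))"
    using Arg_eq[of a] Arg_eq[of b] assms by fastforce
  also have "\<dots> = exp (\<i> * of_real (Arg a + Arg b))"
    by (simp add: algebra_simps flip: exp_add)
  finally have "Arg (a * b) = Arg a + Arg b"
    using True by (simp add: Arg_exp)
  then show ?thesis
    by simp
qed

lemma arcdist_triangle: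
  assumes "x \<in> circle" "y \<in> circle" "z \<in> circle"
  shows "arcdist x z \<le> arcdist x y + arcdist y z"
proof -
  have split: "x * cnj z = (x * cnj y) * (y * cnj z)"
    using mult_cnj_in_circle[OF assms(2)] by (metis mult.assoc mult.left_commute mult_1_right)
  have "arcdist x z = \<bar>Arg ((x * cnj y) * (y * cnj z))\<bar>"
    by (simp only: arcdist_eq_abs_Arg[OF assms(1,3)] split)
  also have "\<dots> \<le> \<bar>Arg (x * cnj y)\<bar> + \<bar>Arg (y * cnj z)\<bar>"
    using assms by (intro abs_Arg_mult_le) (simp_all add: norm_mult norm_in_circle)
  also have "\<dots> = arcdist x y + arcdist y z"
    using assms by (simp add: arcdist_eq_abs_Arg)
  finally show ?thesis .
qed

lemma arcdist_commute: "arcdist z w = arcdist w z"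
  by (simp add: arcdist_def norm_minus_commute)

lemma arcdist_self [simp]: "arcdist z z = 0"
  by (simp add: arcdist_def)

lemma arcdist_nonneg: "z \<in> circle \<Longrightarrow> w \<in> circle \<Longrightarrow> 0 \<le> arcdist z w"
  by (simp add: arcdist_eq_abs_Arg)

lemma norm_diff_le_arcdist:
  assumes "z \<in> circle" "w \<in> circle"
  shows "cmod (z - w) \<le> arcdist z w"
proof -
  let ?a = "arcsin (cmod (z - w) / 2)"
  have bounds: "-1 \<le> cmod (z - w) / 2" "cmod (z - w) / 2 \<le> 1"
    using norm_diff_in_circle_le_2[OF assms] by (auto intro: order_trans[OF _ norm_ge_zero])
  have "sin ?a = cmod (z - w) / 2"
    using bounds by (rule sin_arcsin)
  moreover have "0 \<le> ?a"
    using bounds by (simp add: arcsin_nonneg)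
  ultimately show ?thesis
    using sin_x_le_x[of ?a] by (simp add: arcdist_def)
qed

lemma continuous_on_arcdist: "continuous_on circle (arcdist z)" if "z \<in> circle"
  unfolding arcdist_def
  using that norm_diff_in_circle_le_2[of z]
  by (intro continuous_intros) (auto intro: order_trans[OF _ norm_ge_zero])

section \<open>Matchings of enumerations\<close>

definition match_cost :: "(nat \<Rightarrow> complex) \<Rightarrow> (nat \<Rightarrow> complex) \<Rightarrow> ennreal" where
  "match_cost s t = (\<Sum>j. ennreal (arcdist (s j) (t j)))"

lemma rdist_eq_INF_match_cost:
  "rdist S T = (INF (s, t) \<in> {(s, t). is_enum S s \<and> is_enum T t}. match_cost s t)"
  unfolding rdist_def match_cost_def by (simp add: case_prod_beta)

lemma rdist_le_match_cost: "is_enum S s \<Longrightarrow> is_enum T t \<Longrightarrow> rdist S T \<le> match_cost s t"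
  unfolding rdist_eq_INF_match_cost by (rule INF_lower2[of "(s, t)"]) auto

lemma match_cost_commute: "match_cost s t = match_cost t s"
  by (simp add: match_cost_def arcdist_commute)

lemma match_cost_self [simp]: "match_cost s s = 0"
  by (simp add: match_cost_def)

lemma arcdist_le_match_cost: "ennreal (arcdist (s j) (t j)) \<le> match_cost s t"
  unfolding match_cost_def
  using sum_le_suminf[OF summableI, of "{j}" "\<lambda>j. ennreal (arcdist (s j) (t j))"] by simp

lemma partial_sum_le_match_cost: "(\<Sum>j<N. ennreal (arcdist (s j) (t j))) \<le> match_cost s t"
  unfolding match_cost_def by (rule sum_le_suminf[OF summableI]) auto

lemma match_cost_triangle:
  assumes "\<And>j. a j \<in> circle" "\<And>j. b j \<in> circle" "\<And>j. c j \<in> circle"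
  shows "match_cost a c \<le> match_cost a b + match_cost b c"
proof -
  have "match_cost a c \<le> (\<Sum>j. ennreal (arcdist (a j) (b j)) + ennreal (arcdist (b j) (c j)))"
    unfolding match_cost_def
    using arcdist_triangle[OF assms] arcdist_nonneg assms
    by (intro suminf_le summableI) (simp flip: ennreal_plus add: ennreal_leI)
  also have "\<dots> = match_cost a b + match_cost b c"
    unfolding match_cost_def by (rule suminf_add[symmetric]) auto
  finally show ?thesis .
qed

lemma ecount_eq_0_iff: "ecount s x = 0 \<longleftrightarrow> x \<notin> range s"
  by (auto simp: ecount_def zero_enat_def)
    (metis (mono_tags, lifting) empty_Collect_eq finite.emptyI rangeI)

lemma ecount_mono:
  assumes "{j. a j = x} \<subseteq> {j. b j = y}"
  shows "ecount a x \<le> ecount b y"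
proof (cases "finite {j. b j = y}")
  case True
  then have "finite {j. a j = x}"
    using assms finite_subset by blast
  then show ?thesis
    using True assms by (simp add: ecount_def card_mono)
qed (simp add: ecount_def)

lemma ecount_comp_bij:
  assumes "bij \<sigma>"
  shows "ecount (s \<circ> \<sigma>) x = ecount s x"
proof -
  have "bij_betw \<sigma> {j. (s \<circ> \<sigma>) j = x} {j. s j = x}"
    using assms by (auto simp: bij_betw_def bij_def intro: inj_on_subset)
  then show ?thesis
    unfolding ecount_def by (metis bij_betw_finite bij_betw_same_card)
qed

lemma is_enum_ecount: "is_enum (ecount s) s"
  by (simp add: is_enum_def)

lemma is_enum_nonzero_iff: "is_enum S s \<Longrightarrow> S x \<noteq> 0 \<longleftrightarrow> x \<in> range s"
  unfolding is_enum_def by (metis ecount_eq_0_iff)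

lemma is_enum_in_circle: "is_enum S s \<Longrightarrow> rigged_on_circle S \<Longrightarrow> s j \<in> circle"
  using is_enum_nonzero_iff[of S s "s j"] by (auto simp: rigged_on_circle_def rsupp_def)

lemma suminf_comp_bij_ennreal:
  fixes f :: "nat \<Rightarrow> ennreal"
  assumes "bij \<sigma>"
  shows "(\<Sum>j. f (\<sigma> j)) = (\<Sum>j. f j)"
  using nn_integral_bij_count_space[of \<sigma> UNIV UNIV f] assms
  by (simp add: nn_integral_count_space_nat)

lemma ex_bij_betw_nat_sets:
  fixes A B :: "nat set"
  assumes "finite A \<longleftrightarrow> finite B" "finite A \<Longrightarrow> card A = card B"
  shows "\<exists>g. bij_betw g A B"
proof (cases "finite A")
  case True
  then show ?thesis
    using assms finite_same_card_bij by metis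
next
  case False
  then have "infinite B"
    using assms by auto
  then have "bij_betw (enumerate B \<circ> inv_into UNIV (enumerate A)) A B"
    using bij_betw_trans[OF bij_betw_inv_into[OF bij_enumerate[OF False]] bij_enumerate] by blast
  then show ?thesis
    by blast
qed

text \<open>The permutation is glued together from bijections between the fibres of the two
  enumerations.\<close>

lemma is_enum_permutation:
  assumes a: "is_enum S a" and u: "is_enum S u"
  obtains \<sigma> where "bij \<sigma>" "a \<circ> \<sigma> = u"
proof -
  have "\<exists>g. bij_betw g {j. u j = x} {j. a j = x}" for x
  proof -
    have "ecount u x = ecount a x"
      using a u by (simp add: is_enum_def)
    then show ?thesis
      by (intro ex_bij_betw_nat_sets) (auto simp: ecount_def split: if_splits)
  qed
  then obtain g where g: "\<And>x. bij_betw (g x) {j. u j = x} {j. a j = x}"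
    by metis
  define \<sigma> where "\<sigma> j = g (u j) j" for j
  have au: "a (\<sigma> j) = u j" for j
    using g[of "u j"] unfolding \<sigma>_def bij_betw_def by auto
  have "inj \<sigma>"
  proof (rule injI)
    fix j k
    assume "\<sigma> j = \<sigma> k"
    moreover from this have "u j = u k"
      using au by metis
    ultimately show "j = k"
      using g[of "u j"] unfolding \<sigma>_def bij_betw_def inj_on_def by auto
  qed
  moreover have "i \<in> range \<sigma>" for i
  proof -
    have "i \<in> g (a i) ` {j. u j = a i}"
      using g[of "a i"] unfolding bij_betw_def by auto
    then obtain j where "u j = a i" "i = g (a i) j"
      by auto
    then have "\<sigma> j = i"
      unfolding \<sigma>_def by simp
    then show ?thesis
      by (metis rangeI)
  qed
  ultimately have "bij \<sigma>"
    by (simp add: bij_def surj_def) (metis rangeE)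
  moreover have "a \<circ> \<sigma> = u"
    using au by (simp add: fun_eq_iff)
  ultimately show ?thesis
    by (rule that)
qed

lemma ex_enum_match_cost_less:
  assumes u: "is_enum S u" and less: "rdist S T < c"
  obtains v where "is_enum T v" "match_cost u v < c"
proof -
  obtain a b where ab: "is_enum S a" "is_enum T b" "match_cost a b < c"
    using less unfolding rdist_eq_INF_match_cost INF_less_iff by auto
  obtain \<sigma> where \<sigma>: "bij \<sigma>" "a \<circ> \<sigma> = u"
    using is_enum_permutation[OF ab(1) u] by blast
  have "is_enum T (b \<circ> \<sigma>)"
    using ab(2) \<sigma>(1) by (simp add: is_enum_def ecount_comp_bij)
  moreover have "match_cost u (b \<circ> \<sigma>) = match_cost a b"
    unfolding match_cost_def \<sigma>(2)[symmetric]
    using suminf_comp_bij_ennreal[OF \<sigma>(1), of "\<lambda>j. ennreal (arcdist (a j) (b j))"] by simp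
  ultimately show ?thesis
    using that ab(3) by auto
qed

lemma rdist_commute: "rdist S T = rdist T S"
proof -
  have "rdist T S \<le> rdist S T" for S T
    unfolding rdist_eq_INF_match_cost[of S T]
    by (rule INF_greatest) (use rdist_le_match_cost[of T _ S] match_cost_commute in fastforce)
  then show ?thesis
    by (simp add: antisym)
qed

lemma rdist_triangle:
  assumes "rigged_on_circle S" "rigged_on_circle T" "rigged_on_circle U"
  shows "rdist S U \<le> rdist S T + rdist T U"
proof (rule ennreal_le_epsilon)
  fix e :: real
  assume fin: "rdist S T + rdist T U < top" and e: "0 < e"
  then have "rdist S T < rdist S T + ennreal (e/2)" "rdist T U < rdist T U + ennreal (e/2)"
    by (auto simp: ennreal_add_left_cancel_less top_unique less_top)
  then obtain a b where ab: "is_enum S a" "is_enum T b" "match_cost a b < rdist S T + ennreal (e/2)"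
    unfolding rdist_eq_INF_match_cost[of S T] INF_less_iff by auto
  obtain v where v: "is_enum U v" "match_cost b v < rdist T U + ennreal (e/2)"
    using ex_enum_match_cost_less[OF ab(2) \<open>rdist T U < rdist T U + ennreal (e/2)\<close>] .
  have "rdist S U \<le> match_cost a v"
    by (rule rdist_le_match_cost[OF ab(1) v(1)])
  also have "\<dots> \<le> match_cost a b + match_cost b v"
    using assms ab v by (intro match_cost_triangle) (auto intro: is_enum_in_circle)
  also have "\<dots> \<le> (rdist S T + ennreal (e/2)) + (rdist T U + ennreal (e/2))"
    using ab(3) v(2) by (intro add_mono) auto
  also have "\<dots> = rdist S T + rdist T U + ennreal e"
    using e by (simp add: algebra_simps flip: ennreal_plus)
  finally show "rdist S U \<le> rdist S T + rdist T U + ennreal e" .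
qed

section \<open>The metric space\<close>

lemma S_inf_D:
  assumes "S \<in> S_inf"
  shows "rigged_on_circle S" "S 1 = \<infinity>" "\<And>x. x \<in> circle \<Longrightarrow> accpt S x \<Longrightarrow> x = 1"
  using assms by (auto simp: S_inf_def)

text \<open>As \<open>T x\<close> is finite, \<open>x\<close> is not an accumulation point of \<open>T\<close>, so some
  ball around \<open>x\<close> meets the support of \<open>T\<close> in \<open>x\<close> only; every matching must
  send one of the \<open>S x\<close> copies of \<open>x\<close> out of that ball.\<close>

lemma rdist_pos_if_less:
  assumes S: "S \<in> S_inf" and T: "T \<in> S_inf" and less: "T x < S x"
  shows "0 < rdist S T"
proof -
  have "x \<in> circle"
    using less S_inf_D(1)[OF S] by (auto simp: rigged_on_circle_def rsupp_def)
  moreover have "x \<noteq> 1"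
    using less S_inf_D(2)[OF T] by auto
  ultimately have "\<not> accpt T x"
    using S_inf_D(3)[OF T] by auto
  then obtain U where U: "open U" "x \<in> U" "finite (U \<inter> rsupp T)"
    unfolding accpt_def by auto
  have "open (U - (U \<inter> rsupp T - {x}))"
    using U by (simp add: open_Diff finite_imp_closed)
  moreover have "x \<in> U - (U \<inter> rsupp T - {x})"
    using U(2) by simp
  ultimately obtain \<delta> where \<delta>: "\<delta> > 0" "ball x \<delta> \<subseteq> U - (U \<inter> rsupp T - {x})"
    by (meson open_contains_ball)
  have "ennreal \<delta> \<le> match_cost a b" if ab: "is_enum S a" "is_enum T b" for a b
  proof -
    have "\<not> {j. a j = x} \<subseteq> {j. b j = x}"
      using ab less ecount_mono[of a x b x] by (auto simp: is_enum_def)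
    then obtain j where j: "a j = x" "b j \<noteq> x"
      by auto
    have "b j \<in> rsupp T"
      using is_enum_nonzero_iff[OF ab(2), of "b j"] by (auto simp: rsupp_def)
    then have "b j \<notin> ball x \<delta>"
      using \<delta>(2) j by auto
    then have "\<delta> \<le> cmod (a j - b j)"
      using j(1) by (simp add: dist_norm)
    also have "\<dots> \<le> arcdist (a j) (b j)"
      using S_inf_D(1) S T ab by (intro norm_diff_le_arcdist is_enum_in_circle) auto
    finally have "ennreal \<delta> \<le> ennreal (arcdist (a j) (b j))"
      by (rule ennreal_leI)
    also have "\<dots> \<le> match_cost a b"
      by (rule arcdist_le_match_cost)
    finally show ?thesis .
  qed
  then have "ennreal \<delta> \<le> rdist S T"
    unfolding rdist_eq_INF_match_cost by (intro INF_greatest) auto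
  then show ?thesis
    using \<delta>(1) by (metis ennreal_less_zero_iff order.strict_trans2)
qed

lemma rdist_eq_0_imp_eq:
  assumes "S \<in> S_inf" "T \<in> S_inf" "rdist S T = 0"
  shows "S = T"
proof (rule ext, rule ccontr)
  fix x
  assume "S x \<noteq> T x"
  then have "0 < rdist S T \<or> 0 < rdist T S"
    using rdist_pos_if_less assms(1,2) by (meson linorder_neqE)
  then show False
    using assms(3) by (simp add: rdist_commute)
qed

lemma one_rigged_on_circle: "rigged_on_circle one_rigged"
  by (auto simp: rigged_on_circle_def rsupp_def one_rigged_def one_in_circle)

lemma S_one_imp_rigged_on_circle: "S \<in> S_one \<Longrightarrow> rigged_on_circle S"
  by (simp add: S_one_def S_inf_def)

lemma S_one_imp_ex_enum:
  assumes "S \<in> S_one"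
  obtains s where "is_enum S s"
  using assms unfolding S_one_def rdist_eq_INF_match_cost INF_less_iff by auto

lemma rdist_S_one_finite:
  assumes "S \<in> S_one" "T \<in> S_one"
  shows "rdist S T < \<infinity>"
proof -
  have "rdist S T \<le> rdist S one_rigged + rdist one_rigged T"
    using assms by (intro rdist_triangle one_rigged_on_circle S_one_imp_rigged_on_circle)
  also have "\<dots> < \<infinity>"
    using assms by (simp add: S_one_def rdist_commute[of one_rigged T])
  finally show ?thesis .
qed

lemma rdist_eq_ennreal_rdist_real:
  "S \<in> S_one \<Longrightarrow> T \<in> S_one \<Longrightarrow> rdist S T = ennreal (rdist_real S T)"
  using rdist_S_one_finite by (simp add: rdist_real_def)

lemma rdist_self_S_one:
  assumes "S \<in> S_one"
  shows "rdist S S = 0"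
proof -
  obtain s where "is_enum S s"
    using assms by (rule S_one_imp_ex_enum)
  then have "rdist S S \<le> match_cost s s"
    by (intro rdist_le_match_cost)
  then show ?thesis
    by simp
qed

lemma Metric_space_S_one: "Metric_space S_one rdist_real"
proof
  fix S T
  show "0 \<le> rdist_real S T"
    by (simp add: rdist_real_def)
  show "rdist_real S T = rdist_real T S"
    by (simp add: rdist_real_def rdist_commute)
next
  fix S T
  assume ST: "S \<in> S_one" "T \<in> S_one"
  have "rdist_real S T = 0 \<longleftrightarrow> ennreal (rdist_real S T) = 0"
    by (simp add: rdist_real_def)
  also have "\<dots> \<longleftrightarrow> S = T"
    using ST rdist_eq_0_imp_eq rdist_self_S_one
    by (auto simp: S_one_def simp flip: rdist_eq_ennreal_rdist_real)
  finally show "rdist_real S T = 0 \<longleftrightarrow> S = T" .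
next
  fix S T U
  assume STU: "S \<in> S_one" "T \<in> S_one" "U \<in> S_one"
  then have "rdist S U \<le> rdist S T + rdist T U"
    by (intro rdist_triangle S_one_imp_rigged_on_circle)
  then have "ennreal (rdist_real S U) \<le> ennreal (rdist_real S T) + ennreal (rdist_real T U)"
    using STU by (simp only: rdist_eq_ennreal_rdist_real)
  moreover have "0 \<le> rdist_real S T" "0 \<le> rdist_real T U"
    by (simp_all add: rdist_real_def)
  ultimately show "rdist_real S U \<le> rdist_real S T + rdist_real T U"
    by (simp add: ennreal_le_iff flip: ennreal_plus)
qed

section \<open>Completeness\<close>

lemma (in Metric_space) MCauchy_imp_geometric_subsequence:
  assumes "MCauchy \<sigma>"
  obtains r where "strict_mono r" "\<And>n. d (\<sigma> (r n)) (\<sigma> (r (Suc n))) < (1/2)^n"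
proof -
  have Nex: "\<forall>n. \<exists>N. \<forall>m m'. N \<le> m \<longrightarrow> N \<le> m' \<longrightarrow> d (\<sigma> m) (\<sigma> m') < (1/2)^n"
    using assms unfolding MCauchy_def by auto
  then obtain N where "\<forall>n m m'. N n \<le> m \<longrightarrow> N n \<le> m' \<longrightarrow> d (\<sigma> m) (\<sigma> m') < (1/2)^n"
    using choice[OF Nex] by blast
  then have N: "\<And>n m m'. N n \<le> m \<Longrightarrow> N n \<le> m' \<Longrightarrow> d (\<sigma> m) (\<sigma> m') < (1/2)^n"
    by blast
  define r where "r = rec_nat (N 0) (\<lambda>n rn. max (Suc rn) (N (Suc n)))"
  have r0: "r 0 = N 0" and rSuc: "r (Suc n) = max (Suc (r n)) (N (Suc n))" for n
    by (simp_all add: r_def)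
  have rN: "N n \<le> r n" for n
    by (cases n) (simp_all add: r0 rSuc)
  show ?thesis
  proof
    show "strict_mono r"
      unfolding strict_mono_Suc_iff rSuc by (simp add: less_max_iff_disj)
    show "d (\<sigma> (r n)) (\<sigma> (r (Suc n))) < (1/2)^n" for n
      using rN[of n] rSuc[of n] by (intro N) auto
  qed
qed

lemma (in Metric_space) mcomplete_if_geometric_sequences_converge:
  assumes "\<And>x. range x \<subseteq> M \<Longrightarrow> (\<And>n. d (x n) (x (Suc n)) < (1/2)^n) \<Longrightarrow>
             \<exists>l. limitin mtopology x l sequentially"
  shows mcomplete
  unfolding mcomplete_def
proof (intro allI impI)
  fix \<sigma>
  assume cau: "MCauchy \<sigma>"
  obtain r where r: "strict_mono r" "\<And>n. d (\<sigma> (r n)) (\<sigma> (r (Suc n))) < (1/2)^n"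
    using MCauchy_imp_geometric_subsequence[OF cau] by blast
  moreover have "range (\<sigma> \<circ> r) \<subseteq> M"
    using cau by (auto simp: MCauchy_def)
  ultimately obtain l where "limitin mtopology (\<sigma> \<circ> r) l sequentially"
    using assms[of "\<sigma> \<circ> r"] by auto
  then show "\<exists>l. limitin mtopology \<sigma> l sequentially"
    using MCauchy_convergent_subsequence[OF cau r(1)] by blast
qed

lemma (in Metric_space) limitin_if_dist_le_geometric:
  assumes "l \<in> M" "range x \<subseteq> M" "\<And>n. d (x n) l \<le> C * (1/2)^n"
  shows "limitin mtopology x l sequentially"
proof -
  have "(\<lambda>n. C * (1/2)^n) \<longlonglongrightarrow> 0"
    by (rule tendsto_mult_right_zero, rule LIMSEQ_power_zero) simp
  moreover have "\<forall>\<^sub>F n in sequentially. norm (d (x n) l) \<le> C * (1/2)^n"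
    using assms(3) nonneg by (simp add: always_eventually)
  ultimately have "(\<lambda>n. d (x n) l) \<longlonglongrightarrow> 0"
    by (metis Lim_null_comparison)
  moreover have "\<forall>\<^sub>F n in sequentially. x n \<in> M"
    using assms(2) by (intro always_eventually) auto
  ultimately show ?thesis
    using assms(1) unfolding limitin_metric_dist_null by blast
qed

text \<open>Padding with ones ensures that pointwise limits of padded enumerations still take
  the value 1 infinitely often.\<close>

definition pad_ones :: "(nat \<Rightarrow> complex) \<Rightarrow> nat \<Rightarrow> complex" where
  "pad_ones s j = (if even j then s (j div 2) else 1)"

lemma infinite_Collect_if_odd:
  "(\<And>j. odd j \<Longrightarrow> P j) \<Longrightarrow> infinite {j :: nat. P j}"
proof -
  assume "\<And>j. odd j \<Longrightarrow> P j"
  then have "range (\<lambda>i::nat. 2 * i + 1) \<subseteq> {j. P j}"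
    by auto
  moreover have "infinite (range (\<lambda>i::nat. 2 * i + 1))"
    by (rule range_inj_infinite) (auto intro: injI)
  ultimately show ?thesis
    using finite_subset by blast
qed

lemma is_enum_pad_ones:
  assumes "is_enum S s" "S 1 = \<infinity>"
  shows "is_enum S (pad_ones s)"
  unfolding is_enum_def
proof
  fix x
  show "ecount (pad_ones s) x = S x"
  proof (cases "x = 1")
    case True
    then have "infinite {j. pad_ones s j = x}"
      by (intro infinite_Collect_if_odd) (simp add: pad_ones_def)
    then show ?thesis
      using True assms(2) by (simp add: ecount_def)
  next
    case False
    then have "{j. pad_ones s j = x} = (\<lambda>i. 2 * i) ` {i. s i = x}"
      by (auto simp: pad_ones_def elim!: evenE split: if_splits)
    then have "bij_betw (\<lambda>i::nat. 2 * i) {i. s i = x} {j. pad_ones s j = x}"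
      by (simp add: inj_on_def bij_betw_def)
    then have "ecount (pad_ones s) x = ecount s x"
      unfolding ecount_def by (metis bij_betw_finite bij_betw_same_card)
    then show ?thesis
      using assms(1) by (simp add: is_enum_def)
  qed
qed

lemma match_cost_pad_ones: "match_cost (pad_ones a) (pad_ones b) = match_cost a b"
proof -
  have "(\<Sum>i. ennreal (arcdist (pad_ones a (2 * i)) (pad_ones b (2 * i))))
          = (\<Sum>j. ennreal (arcdist (pad_ones a j) (pad_ones b j)))"
    by (rule suminf_mono_reindex) (auto simp: strict_mono_def pad_ones_def elim: oddE)
  then show ?thesis
    unfolding match_cost_def by (simp add: pad_ones_def)
qed

lemma is_enum_one_rigged_iff: "is_enum one_rigged v \<longleftrightarrow> v = (\<lambda>_. 1)"
proof
  assume v: "is_enum one_rigged v"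
  show "v = (\<lambda>_. 1)"
  proof
    fix j
    have "one_rigged (v j) \<noteq> 0"
      using is_enum_nonzero_iff[OF v, of "v j"] by auto
    then show "v j = 1"
      by (simp add: one_rigged_def split: if_splits)
  qed
next
  assume "v = (\<lambda>_. 1)"
  then show "is_enum one_rigged v"
    by (auto simp: is_enum_def ecount_def one_rigged_def zero_enat_def)
qed

lemma match_cost_to_1_finite:
  assumes "S \<in> S_one" "is_enum S s"
  shows "match_cost s (\<lambda>_. 1) < \<infinity>"
proof -
  obtain v where "is_enum one_rigged v" "match_cost s v < \<infinity>"
    using assms ex_enum_match_cost_less by (metis S_one_def mem_Collect_eq)
  then show ?thesis
    by (simp add: is_enum_one_rigged_iff)
qed

lemma ex_enum_chain:
  assumes s0: "is_enum (T 0) s0"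
    and dT: "\<And>n. rdist (T n) (T (Suc n)) < ennreal ((1/2)^n)"
  obtains f where "\<And>n. is_enum (T n) (f n)"
    "\<And>n. match_cost (f n) (f (Suc n)) < ennreal ((1/2)^n)"
proof -
  have "\<forall>n u. \<exists>v. is_enum (T n) u \<longrightarrow>
          is_enum (T (Suc n)) v \<and> match_cost u v < ennreal ((1/2)^n)"
    using ex_enum_match_cost_less[OF _ dT] by metis
  then obtain V where V: "\<And>n u. is_enum (T n) u \<Longrightarrow>
      is_enum (T (Suc n)) (V n u) \<and> match_cost u (V n u) < ennreal ((1/2)^n)"
    by metis
  define f where "f = rec_nat s0 V"
  have f: "is_enum (T n) (f n)" for n
    by (induction n) (simp_all add: f_def s0 V)
  show ?thesis
  proof (rule that[OF f])
    show "match_cost (f n) (f (Suc n)) < ennreal ((1/2)^n)" for n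
      using V[OF f[of n]] by (simp add: f_def)
  qed
qed

lemma match_cost_chain_le:
  assumes fc: "\<And>n j. f n j \<in> circle"
    and fd: "\<And>n. match_cost (f n) (f (Suc n)) < ennreal ((1/2)^n)"
    and "n \<le> m"
  shows "match_cost (f n) (f m) \<le> ennreal (2 * (1/2)^n - 2 * (1/2)^m)"
  using \<open>n \<le> m\<close>
proof (induction m rule: dec_induct)
  case (step k)
  have "(1/2::real)^k \<le> (1/2)^n"
    using step.hyps(1) by (simp add: power_decreasing)
  then have nonneg: "0 \<le> 2 * (1/2::real)^n - 2 * (1/2)^k"
    by simp
  have "match_cost (f n) (f (Suc k)) \<le> match_cost (f n) (f k) + match_cost (f k) (f (Suc k))"
    by (rule match_cost_triangle) (rule fc)+
  also have "\<dots> \<le> ennreal (2 * (1/2)^n - 2 * (1/2)^k) + ennreal ((1/2)^k)"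
    using step.IH fd[of k] by (intro add_mono) auto
  also have "\<dots> = ennreal (2 * (1/2)^n - 2 * (1/2)^Suc k)"
    using nonneg by (simp flip: ennreal_plus)
  finally show ?case .
qed simp

lemma match_cost_chain_limit:
  assumes fc: "\<And>n j. f n j \<in> circle"
    and fd: "\<And>n. match_cost (f n) (f (Suc n)) < ennreal ((1/2)^n)"
  obtains t where "\<And>j. (\<lambda>n. f n j) \<longlonglongrightarrow> t j" "\<And>j. t j \<in> circle"
    "\<And>n. match_cost (f n) t \<le> ennreal (2 * (1/2)^n)"
proof -
  have tail: "match_cost (f n) (f m) \<le> ennreal (2 * (1/2)^n)" if "n \<le> m" for n m
    using match_cost_chain_le[OF fc fd that] by (rule order_trans) (simp add: ennreal_leI)
  have "Cauchy (\<lambda>n. f n j)" for j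
    unfolding Cauchy_altdef2
  proof (intro allI impI)
    fix e :: real
    assume "0 < e"
    then obtain N where N: "(1/2)^N < e/2"
      using real_arch_pow_inv[of "e/2" "1/2"] by auto
    have "dist (f n j) (f N j) < e" if "N \<le> n" for n
    proof -
      have "ennreal (dist (f n j) (f N j)) \<le> ennreal (arcdist (f N j) (f n j))"
        using norm_diff_le_arcdist[OF fc fc] by (simp add: dist_norm norm_minus_commute ennreal_leI)
      also have "\<dots> \<le> match_cost (f N) (f n)"
        by (rule arcdist_le_match_cost)
      also have "\<dots> \<le> ennreal (2 * (1/2)^N)"
        by (rule tail) fact
      finally have "dist (f n j) (f N j) \<le> 2 * (1/2)^N"
        by (simp add: ennreal_le_iff)
      then show ?thesis
        using N by linarith
    qed
    then show "\<exists>N. \<forall>n\<ge>N. dist (f n j) (f N j) < e"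
      by blast
  qed
  then obtain t where t: "\<And>j. (\<lambda>n. f n j) \<longlonglongrightarrow> t j"
    unfolding Cauchy_convergent_iff convergent_def by metis
  have tc: "t j \<in> circle" for j
    by (rule Lim_in_closed_set[OF closed_circle _ _ t]) (auto simp: fc)
  have "match_cost (f n) t \<le> ennreal (2 * (1/2)^n)" for n
    unfolding match_cost_def
  proof (rule suminf_le_const[OF summableI])
    fix N
    have lim: "(\<lambda>m. \<Sum>j<N. ennreal (arcdist (f n j) (f m j)))
            \<longlonglongrightarrow> (\<Sum>j<N. ennreal (arcdist (f n j) (t j)))"
      using continuous_on_tendsto_compose[OF continuous_on_arcdist[OF fc] t tc] fc
      by (intro tendsto_sum tendsto_ennrealI) simp
    have "(\<Sum>j<N. ennreal (arcdist (f n j) (f m j))) \<le> ennreal (2 * (1/2)^n)"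
      if "n \<le> m" for m
      using partial_sum_le_match_cost tail[OF that] by (rule order_trans)
    then show "(\<Sum>j<N. ennreal (arcdist (f n j) (t j))) \<le> ennreal (2 * (1/2)^n)"
      by (intro LIMSEQ_le_const2[OF lim]) auto
  qed
  with t tc show ?thesis
    by (rule that)
qed

lemma finite_far_from_1:
  assumes fin: "match_cost t (\<lambda>_. 1) < \<infinity>" and tc: "\<And>j. t j \<in> circle" and r: "0 < r"
  shows "finite {j. r \<le> cmod (t j - 1)}"
proof -
  have "summable (\<lambda>j. arcdist (t j) 1)"
    using fin tc one_in_circle arcdist_nonneg
    by (intro summable_suminf_not_top) (auto simp: match_cost_def)
  then have "(\<lambda>j. arcdist (t j) 1) \<longlonglongrightarrow> 0"
    by (rule summable_LIMSEQ_zero)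
  from order_tendstoD(2)[OF this r]
  obtain N where N: "\<And>j. N \<le> j \<Longrightarrow> arcdist (t j) 1 < r"
    unfolding eventually_sequentially by blast
  have "{j. r \<le> cmod (t j - 1)} \<subseteq> {..<N}"
  proof
    fix j
    assume "j \<in> {j. r \<le> cmod (t j - 1)}"
    then have "\<not> arcdist (t j) 1 < r"
      using norm_diff_le_arcdist[OF tc one_in_circle, of j] by simp
    then show "j \<in> {..<N}"
      using N by (meson lessThan_iff not_le)
  qed
  then show ?thesis
    by (rule finite_subset) simp
qed

lemma accpt_ecount_imp_eq_1:
  assumes fin: "match_cost t (\<lambda>_. 1) < \<infinity>" and tc: "\<And>j. t j \<in> circle"
    and acc: "accpt (ecount t) x"
  shows "x = 1"
proof (rule ccontr)
  assume "x \<noteq> 1"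
  define r where "r = cmod (x - 1) / 2"
  have r: "0 < r"
    using \<open>x \<noteq> 1\<close> by (simp add: r_def)
  define K where "K = {j. r \<le> cmod (t j - 1)}"
  have K: "finite K"
    unfolding K_def using fin tc r by (rule finite_far_from_1)
  have near: "{j. t j = y} \<subseteq> K" if "y \<in> ball x r" for y
  proof
    fix j
    assume "j \<in> {j. t j = y}"
    then have "cmod (x - t j) < r"
      using that by (simp add: dist_norm)
    moreover have "cmod (x - 1) \<le> cmod (x - t j) + cmod (t j - 1)"
      using norm_triangle_ineq[of "x - t j" "t j - 1"] by simp
    ultimately show "j \<in> K"
      by (simp add: K_def r_def)
  qed
  have "rsupp (ecount t) = range t"
    by (auto simp: rsupp_def ecount_eq_0_iff)
  then have "ball x r \<inter> rsupp (ecount t) \<subseteq> t ` K"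
    using near by fastforce
  then have "finite (ball x r \<inter> rsupp (ecount t))"
    using K finite_subset by blast
  moreover have "ecount t y \<noteq> \<infinity>" if "y \<in> ball x r" for y
    using near[OF that] K finite_subset by (auto simp: ecount_def)
  ultimately show False
    using acc r unfolding accpt_def by (meson centre_in_ball open_ball)
qed

lemma ecount_in_S_one:
  assumes tc: "\<And>j. t j \<in> circle" and ones: "infinite {j. t j = 1}"
    and fin: "match_cost t (\<lambda>_. 1) < \<infinity>"
  shows "ecount t \<in> S_one"
proof -
  have "rsupp (ecount t) = range t"
    by (auto simp: rsupp_def ecount_eq_0_iff)
  then have "ecount t \<in> S_inf"
    using tc ones accpt_ecount_imp_eq_1[OF fin tc]
    by (auto simp: S_inf_def rigged_on_circle_def ecount_def)
  moreover have "rdist (ecount t) one_rigged \<le> match_cost t (\<lambda>_. 1)"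
    by (rule rdist_le_match_cost[OF is_enum_ecount]) (simp add: is_enum_one_rigged_iff)
  ultimately show ?thesis
    using fin by (simp add: S_one_def)
qed

lemma S_one_geometric_chain_limit:
  assumes T: "\<And>n. T n \<in> S_one" and dT: "\<And>n. rdist (T n) (T (Suc n)) < ennreal ((1/2)^n)"
  obtains S where "S \<in> S_one" "\<And>n. rdist (T n) S \<le> ennreal (2 * (1/2)^n)"
proof -
  obtain s0 where "is_enum (T 0) s0"
    using T by (rule S_one_imp_ex_enum)
  then obtain e where e: "\<And>n. is_enum (T n) (e n)"
    "\<And>n. match_cost (e n) (e (Suc n)) < ennreal ((1/2)^n)"
    using dT ex_enum_chain by metis
  define f where "f n = pad_ones (e n)" for n
  have fe: "is_enum (T n) (f n)" for n
    unfolding f_def using e(1) T by (intro is_enum_pad_ones) (auto simp: S_one_def S_inf_def)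
  have fc: "f n j \<in> circle" for n j
    using fe T by (intro is_enum_in_circle S_one_imp_rigged_on_circle)
  have fd: "match_cost (f n) (f (Suc n)) < ennreal ((1/2)^n)" for n
    using e(2) by (simp add: f_def match_cost_pad_ones)
  obtain t where t: "\<And>j. (\<lambda>n. f n j) \<longlonglongrightarrow> t j" "\<And>j. t j \<in> circle"
    "\<And>n. match_cost (f n) t \<le> ennreal (2 * (1/2)^n)"
    using match_cost_chain_limit[OF fc fd] by blast
  have "t j = 1" if "odd j" for j
    using t(1)[of j] that by (simp add: f_def pad_ones_def LIMSEQ_const_iff)
  then have ones: "infinite {j. t j = 1}"
    by (rule infinite_Collect_if_odd)
  have "match_cost t (\<lambda>_. 1) \<le> match_cost t (f 0) + match_cost (f 0) (\<lambda>_. 1)"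
    by (rule match_cost_triangle) (simp_all add: fc t(2) one_in_circle)
  also have "\<dots> < \<infinity>"
  proof -
    have "match_cost t (f 0) < \<infinity>"
      using t(3)[of 0] by (metis match_cost_commute ennreal_less_top infinity_ennreal_def
          order.strict_trans1)
    then show ?thesis
      using match_cost_to_1_finite[OF T fe] by (simp add: less_top[symmetric])
  qed
  finally have "ecount t \<in> S_one"
    using t(2) ones by (intro ecount_in_S_one)
  moreover have "rdist (T n) (ecount t) \<le> ennreal (2 * (1/2)^n)" for n
    using rdist_le_match_cost[OF fe is_enum_ecount] t(3) by (rule order_trans)
  ultimately show ?thesis
    by (rule that)
qed

theorem mainTheorem7:
  shows "Metric_space S_one rdist_real \<and> Metric_space.mcomplete S_one rdist_real"
proof
  show "Metric_space S_one rdist_real"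
    by (rule Metric_space_S_one)
  interpret Metric_space S_one rdist_real
    by (rule Metric_space_S_one)
  show mcomplete
  proof (rule mcomplete_if_geometric_sequences_converge)
    fix T
    assume T: "range T \<subseteq> S_one" and dT: "\<And>n. rdist_real (T n) (T (Suc n)) < (1/2)^n"
    have "rdist (T n) (T (Suc n)) < ennreal ((1/2)^n)" for n
      using T dT[of n] by (simp add: range_subsetD rdist_eq_ennreal_rdist_real ennreal_lessI)
    then obtain S where S: "S \<in> S_one" "\<And>n. rdist (T n) S \<le> ennreal (2 * (1/2)^n)"
      using T S_one_geometric_chain_limit by blast
    then have "rdist_real (T n) S \<le> 2 * (1/2)^n" for n
      by (simp add: rdist_real_def enn2real_leI)
    then show "\<exists>S. limitin mtopology T S sequentially"
      using S(1) T by (blast intro: limitin_if_dist_le_geometric)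
  qed
qed

end
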